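(* Let $C_{sp}(E)$ be as in the context, let $\Delta_n\ge0$ be constants and $c_n$ bounded functions, $n\in\mathbb{N}_0$, and let $T_n:C_{sp}(E)\to C_{sp}(E)$ be operators such that (i) $\|T_nv_1-T_nv_2\|_{sp}\le\Delta_n\|v_1-v_2\|_{sp}$ for all $v_1,v_2\in C_{sp}(E)$; (ii) $\|T_n0\|_{sp}\le\|c_n\|_{sp}$; (iii) for each $n$, $\lim_{k\to\infty}\Delta_n\Delta_{n+1}\cdots\Delta_{n+k}=0$; (iv) $R_n:=\|c_n\|_{sp}+\sum_{i=0}^\infty\Delta_n\cdots\Delta_{n+i}\|c_{n+i+1}\|_{sp}<\infty$ for each $n$. Then there is a sequence $w_n\in C_{sp}(E)$ with $\|T_nw_{n+1}-w_n\|_{sp}=0$ for $n=0,1,\ldots$. Moreover $\|w_n\|_{sp}\le R_n$ and for all $n$ and $k\ge1$ $$\|T_nT_{n+1}\cdots T_{n+k-1}0-w_n\|_{sp}\le\Delta_n\cdots\Delta_{n+k-1}\|w_{n+k}\|_{sp}.$$ Furthermore, when $\sup_n\|w_n\|_{sp}<\infty$, the $w_n$ are unique up to an additive constant, in the sense that any sequence $\tilde w_n\in C_{sp}(E)$ with $\|T_n\tilde w_{n+1}-\tilde w_n\|_{sp}=0$ for all $n$ and $\sup_n\|\tilde w_n\|_{sp}<\infty$ satisfies $\|\tilde w_n-w_n\|_{sp}=0$ for all $n$.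
   Context: $E$ is a complete separable metric space, $U$ a set, $C(E)$ the bounded continuous real functions on $E$. The span seminorm is $\|v\|_{sp}=\sup_{x,x'\in E}(v(x)-v(x'))$; $C_{sp}(E)$ is the quotient of $C(E)$ by the relation $v_1\equiv v_2$ iff $\|v_1-v_2\|_{sp}=0$ (i.e. modulo constants), normed by $\|\cdot\|_{sp}$. For a bounded $c_n:E\times U\to\mathbb{R}$, $\|c_n\|_{sp}=\sup_{x,x'\in E}\sup_{a,a'\in U}(c_n(x,a)-c_n(x',a'))$. *)

theory Defs
  imports "HOL-Analysis.Analysis"
begin

text \<open>Span seminorm on bounded continuous functions C(E).  C_sp(E) is represented
  by C(E) with all statements made modulo the seminorm (equality in C_sp means
  span seminorm of the difference is 0).\<close>
definition sp_norm :: "('e::metric_space \<Rightarrow>\<^sub>C real) \<Rightarrow> real" where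
  "sp_norm v = (SUP p. apply_bcontfun v (fst p) - apply_bcontfun v (snd p))"

definition sp_cost :: "('e \<Rightarrow> 'u \<Rightarrow> real) \<Rightarrow> real" where
  "sp_cost c = (SUP p. c (fst (fst p)) (snd (fst p)) - c (fst (snd p)) (snd (snd p)))"

fun iter_T :: "(nat \<Rightarrow> 'a \<Rightarrow> 'a) \<Rightarrow> nat \<Rightarrow> nat \<Rightarrow> 'a \<Rightarrow> 'a" where
  "iter_T T n 0 v = v"
| "iter_T T n (Suc k) v = T n (iter_T T (Suc n) k v)"

end

theory Submission
  imports Defs
begin

text \<open>The iterates \<open>a n k = T n (T (n+1) (\<dots> (T (n+k-1) 0)))\<close> move by at most
  \<open>\<Delta> n \<cdots> \<Delta> (n+k-1) \<parallel>T (n+k) 0\<parallel>\<close> from \<open>k\<close> to \<open>k+1\<close>, and these steps are summable by (iv),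
  so \<open>a n\<close> is Cauchy in \<open>C\<^sub>s\<^sub>p(E)\<close>. That space is complete, because subtracting the value at a
  fixed base point turns span-Cauchy sequences into uniformly Cauchy ones. The limits \<open>w n\<close>
  satisfy \<open>T n (w (n+1)) = w n\<close> by continuity of \<open>T n\<close>. Iterating this equation, two
  solutions differ at \<open>n\<close> by at most \<open>\<Delta> n \<cdots> \<Delta> (n+k-1)\<close> times their difference at \<open>n+k\<close>,
  which tends to \<open>0\<close> for bounded solutions by (iii).\<close>

section \<open>The span seminorm\<close>

lemma sp_norm_bdd_above:
  "bdd_above (range (\<lambda>p. apply_bcontfun (v::'e::metric_space \<Rightarrow>\<^sub>C real) (fst p) - v (snd p)))"
proof (rule bdd_aboveI2)
  fix p :: "'e \<times> 'e"
  show "apply_bcontfun v (fst p) - v (snd p) \<le> 2 * norm v"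
    using norm_bounded[of v "fst p"] norm_bounded[of v "snd p"] by simp
qed

lemma sp_norm_upper: "apply_bcontfun v x - v y \<le> sp_norm (v::'e::metric_space \<Rightarrow>\<^sub>C real)"
  unfolding sp_norm_def using cSUP_upper[OF UNIV_I sp_norm_bdd_above, of v "(x, y)"] by simp

lemma sp_norm_least:
  "(\<And>x y. apply_bcontfun v x - v y \<le> B) \<Longrightarrow> sp_norm (v::'e::metric_space \<Rightarrow>\<^sub>C real) \<le> B"
  unfolding sp_norm_def by (rule cSUP_least) auto

lemma sp_norm_zero [simp]: "sp_norm (0::'e::metric_space \<Rightarrow>\<^sub>C real) = 0"
  unfolding sp_norm_def by simp

lemma sp_norm_nonneg: "0 \<le> sp_norm (v::'e::metric_space \<Rightarrow>\<^sub>C real)"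
  using sp_norm_upper[of v undefined undefined] by simp

lemma sp_norm_le_norm: "sp_norm (v::'e::metric_space \<Rightarrow>\<^sub>C real) \<le> 2 * norm v"
proof (rule sp_norm_least)
  fix x y
  show "apply_bcontfun v x - v y \<le> 2 * norm v"
    using norm_bounded[of v x] norm_bounded[of v y] by simp
qed

lemma sp_norm_triangle:
  "sp_norm (u - w) \<le> sp_norm (u - v) + sp_norm (v - (w::'e::metric_space \<Rightarrow>\<^sub>C real))"
proof (rule sp_norm_least)
  fix x y
  show "apply_bcontfun (u - w) x - (u - w) y \<le> sp_norm (u - v) + sp_norm (v - w)"
    using sp_norm_upper[of "u - v" x y] sp_norm_upper[of "v - w" x y] by simp
qed

lemma sp_norm_minus_commute: "sp_norm (u - v) = sp_norm (v - (u::'e::metric_space \<Rightarrow>\<^sub>C real))"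
proof -
  have "sp_norm (u - v) \<le> sp_norm (v - u)" for u v :: "'e \<Rightarrow>\<^sub>C real"
  proof (rule sp_norm_least)
    fix x y
    show "apply_bcontfun (u - v) x - (u - v) y \<le> sp_norm (v - u)"
      using sp_norm_upper[of "v - u" y x] by simp
  qed
  then show ?thesis
    by (meson antisym)
qed

lemma sp_norm_uminus: "sp_norm (- v) = sp_norm (v::'e::metric_space \<Rightarrow>\<^sub>C real)"
  using sp_norm_minus_commute[of 0 v] by simp

lemma sp_norm_diff_const: "sp_norm (v - const_bcontfun a) = sp_norm (v::'e::metric_space \<Rightarrow>\<^sub>C real)"
  unfolding sp_norm_def by simp

lemma sp_norm_eq_0_if_le_null_seq:
  fixes v :: "'e::metric_space \<Rightarrow>\<^sub>C real"
  assumes "\<And>k. sp_norm v \<le> X k" and "X \<longlonglongrightarrow> 0"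
  shows "sp_norm v = 0"
  using LIMSEQ_le_const[OF assms(2)] assms(1) sp_norm_nonneg[of v] by (meson antisym)

section \<open>Completeness of \<open>C\<^sub>s\<^sub>p(E)\<close>\<close>

lemma sp_norm_Cauchy_convergent:
  fixes a :: "nat \<Rightarrow> ('e::metric_space \<Rightarrow>\<^sub>C real)"
  assumes Cauchy: "\<And>e. e > 0 \<Longrightarrow> \<exists>N. \<forall>m\<ge>N. \<forall>k\<ge>N. sp_norm (a m - a k) < e"
  obtains w where "(\<lambda>k. sp_norm (a k - w)) \<longlonglongrightarrow> 0"
proof -
  define u where "u k = a k - const_bcontfun (apply_bcontfun (a k) undefined)" for k
  have dist_u: "dist (u m) (u k) \<le> sp_norm (a m - a k)" for m k
  proof (rule dist_bound)
    fix x
    show "dist (apply_bcontfun (u m) x) (u k x) \<le> sp_norm (a m - a k)"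
      using sp_norm_upper[of "a m - a k" x undefined] sp_norm_upper[of "a m - a k" undefined x]
      by (simp add: u_def dist_real_def abs_le_iff)
  qed
  have "Cauchy u"
  proof (rule metric_CauchyI)
    fix e :: real
    assume "e > 0"
    then obtain N where "\<forall>m\<ge>N. \<forall>k\<ge>N. sp_norm (a m - a k) < e"
      using Cauchy by blast
    then show "\<exists>M. \<forall>m\<ge>M. \<forall>n\<ge>M. dist (u m) (u n) < e"
      using dist_u by (meson le_less_trans)
  qed
  then obtain w where "u \<longlonglongrightarrow> w"
    using convergent_eq_Cauchy by blast
  then have "(\<lambda>k. dist (u k) w) \<longlonglongrightarrow> 0"
    by (rule tendsto_dist_iff[THEN iffD1])
  then have dist_null: "(\<lambda>k. 2 * dist (u k) w) \<longlonglongrightarrow> 0"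
    by (rule tendsto_mult_right_zero)
  have "(\<lambda>k. sp_norm (u k - w)) \<longlonglongrightarrow> 0"
  proof (rule real_tendsto_sandwich[OF _ _ tendsto_const dist_null])
    show "\<forall>\<^sub>F k in sequentially. 0 \<le> sp_norm (u k - w)"
      by (simp add: sp_norm_nonneg)
    show "\<forall>\<^sub>F k in sequentially. sp_norm (u k - w) \<le> 2 * dist (u k) w"
      by (simp add: dist_norm sp_norm_le_norm)
  qed
  moreover have "sp_norm (a k - w) = sp_norm (u k - w)" for k
    using sp_norm_diff_const[of "a k - w"] by (simp add: u_def algebra_simps)
  ultimately have "(\<lambda>k. sp_norm (a k - w)) \<longlonglongrightarrow> 0"
    by simp
  then show ?thesis ..
qed

lemma sp_norm_le_sum_increments:
  fixes a :: "nat \<Rightarrow> ('e::metric_space \<Rightarrow>\<^sub>C real)"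
  assumes increment: "\<And>k. sp_norm (a (Suc k) - a k) \<le> b k" and "k \<le> m"
  shows "sp_norm (a m - a k) \<le> sum b {k..<m}"
  using \<open>k \<le> m\<close>
proof (induction m rule: dec_induct)
  case base
  show ?case
    by simp
next
  case (step m)
  have "sp_norm (a (Suc m) - a k) \<le> sp_norm (a (Suc m) - a m) + sp_norm (a m - a k)"
    by (rule sp_norm_triangle)
  also have "\<dots> \<le> b m + sum b {k..<m}"
    using increment step.IH by (rule add_mono)
  also have "\<dots> = sum b {k..<Suc m}"
    using step.hyps by simp
  finally show ?case .
qed

lemma sp_norm_summable_increments_convergent:
  fixes a :: "nat \<Rightarrow> ('e::metric_space \<Rightarrow>\<^sub>C real)"
  assumes increment: "\<And>k. sp_norm (a (Suc k) - a k) \<le> b k" and "summable b"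
  obtains w where "(\<lambda>k. sp_norm (a k - w)) \<longlonglongrightarrow> 0" and "sp_norm (w - a 0) \<le> suminf b"
proof -
  have b_nonneg: "0 \<le> b k" for k
    using increment[of k] sp_norm_nonneg order_trans by blast
  have partial: "sp_norm (a m - a k) \<le> sum b {k..<m}" if "k \<le> m" for k m
    using increment that by (rule sp_norm_le_sum_increments)
  obtain w where lim: "(\<lambda>k. sp_norm (a k - w)) \<longlonglongrightarrow> 0"
  proof (rule sp_norm_Cauchy_convergent)
    fix e :: real
    assume "e > 0"
    then obtain N where N: "\<forall>m\<ge>N. \<forall>n. norm (sum b {m..<n}) < e"
      using \<open>summable b\<close> unfolding summable_Cauchy by blast
    have small: "sp_norm (a m - a k) < e" if "k \<ge> N" "k \<le> m" for m k
      using partial[OF \<open>k \<le> m\<close>] N[rule_format, OF \<open>N \<le> k\<close>, of m] abs_ge_self[of "sum b {k..<m}"]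
      by (simp only: real_norm_def)
    have "sp_norm (a m - a k) < e" if "m \<ge> N" "k \<ge> N" for m k
    proof (cases "k \<le> m")
      case True
      with \<open>k \<ge> N\<close> show ?thesis
        by (rule small)
    next
      case False
      with small[OF \<open>m \<ge> N\<close>, of k] show ?thesis
        by (simp add: sp_norm_minus_commute)
    qed
    then show "\<exists>N. \<forall>m\<ge>N. \<forall>k\<ge>N. sp_norm (a m - a k) < e"
      by blast
  qed
  moreover have "sp_norm (w - a 0) \<le> suminf b"
  proof -
    have upper: "sp_norm (w - a 0) \<le> sp_norm (a k - w) + suminf b" for k
    proof -
      have "sp_norm (w - a 0) \<le> sp_norm (w - a k) + sp_norm (a k - a 0)"
        by (rule sp_norm_triangle)
      also have "sp_norm (a k - a 0) \<le> suminf b"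
        using partial[of 0 k] sum_le_suminf[OF \<open>summable b\<close>, of "{0..<k}"] b_nonneg by simp
      finally show ?thesis
        by (simp add: sp_norm_minus_commute)
    qed
    have "(\<lambda>k. sp_norm (a k - w) + suminf b) \<longlonglongrightarrow> 0 + suminf b"
      using lim tendsto_const by (rule tendsto_add)
    from LIMSEQ_le_const[OF this] upper show ?thesis
      by simp
  qed
  ultimately show ?thesis ..
qed

lemma prod_weighted_series_split_head:
  fixes d x :: "nat \<Rightarrow> real"
  assumes "summable (\<lambda>i. (\<Prod>j\<le>i. d j) * x (Suc i))"
  shows "summable (\<lambda>k. (\<Prod>j<k. d j) * x k)"
    and "(\<Sum>k. (\<Prod>j<k. d j) * x k) = x 0 + (\<Sum>i. (\<Prod>j\<le>i. d j) * x (Suc i))"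
proof -
  have shift: "(\<lambda>i. (\<Prod>j<Suc i. d j) * x (Suc i)) = (\<lambda>i. (\<Prod>j\<le>i. d j) * x (Suc i))"
    by (simp add: lessThan_Suc_atMost)
  show summable: "summable (\<lambda>k. (\<Prod>j<k. d j) * x k)"
    using assms unfolding shift[symmetric] by (rule summable_Suc_iff[THEN iffD1])
  show "(\<Sum>k. (\<Prod>j<k. d j) * x k) = x 0 + (\<Sum>i. (\<Prod>j\<le>i. d j) * x (Suc i))"
    using suminf_split_head[OF summable] unfolding shift by simp
qed

section \<open>Compositions of span-Lipschitz operators\<close>

lemma iter_T_Suc_right: "iter_T T n (Suc k) v = iter_T T n k (T (n + k) v)"
  by (induction k arbitrary: n) auto

locale sp_lipschitz_family =
  fixes T :: "nat \<Rightarrow> ('e::metric_space \<Rightarrow>\<^sub>C real) \<Rightarrow> ('e \<Rightarrow>\<^sub>C real)"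
    and \<Delta> :: "nat \<Rightarrow> real"
  assumes Delta_nonneg: "\<And>n. \<Delta> n \<ge> 0"
    and sp_lipschitz: "\<And>n v1 v2. sp_norm (T n v1 - T n v2) \<le> \<Delta> n * sp_norm (v1 - v2)"
begin

lemma iter_T_sp_lipschitz:
  "sp_norm (iter_T T n k u - iter_T T n k v) \<le> (\<Prod>j<k. \<Delta> (n + j)) * sp_norm (u - v)"
proof (induction k arbitrary: n)
  case 0
  show ?case
    by simp
next
  case (Suc k)
  have "sp_norm (iter_T T n (Suc k) u - iter_T T n (Suc k) v)
      \<le> \<Delta> n * sp_norm (iter_T T (Suc n) k u - iter_T T (Suc n) k v)"
    using sp_lipschitz by simp
  also have "\<dots> \<le> \<Delta> n * ((\<Prod>j<k. \<Delta> (Suc n + j)) * sp_norm (u - v))"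
    using Suc.IH Delta_nonneg by (rule mult_left_mono)
  also have "\<dots> = (\<Prod>j<Suc k. \<Delta> (n + j)) * sp_norm (u - v)"
    unfolding prod.lessThan_Suc_shift by (simp add: mult.assoc)
  finally show ?case .
qed

lemma iter_T_solution:
  assumes solution: "\<And>n. sp_norm (T n (w (Suc n)) - w n) = 0"
  shows "sp_norm (iter_T T n k (w (n + k)) - w n) = 0"
proof (induction k arbitrary: n)
  case 0
  show ?case
    by simp
next
  case (Suc k)
  have "sp_norm (iter_T T n (Suc k) (w (n + Suc k)) - w n)
     \<le> sp_norm (T n (iter_T T (Suc n) k (w (Suc n + k))) - T n (w (Suc n)))
        + sp_norm (T n (w (Suc n)) - w n)"
    using sp_norm_triangle by simp
  also have "\<dots> \<le> \<Delta> n * sp_norm (iter_T T (Suc n) k (w (Suc n + k)) - w (Suc n))"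
    using sp_lipschitz solution by simp
  also have "\<dots> = 0"
    using Suc.IH[of "Suc n"] by simp
  finally show ?case
    using sp_norm_nonneg by (rule antisym)
qed

lemma iter_T_zero_increment:
  "sp_norm (iter_T T n (Suc k) 0 - iter_T T n k 0) \<le> (\<Prod>j<k. \<Delta> (n + j)) * sp_norm (T (n + k) 0)"
  using iter_T_sp_lipschitz[of n k "T (n + k) 0" 0] unfolding iter_T_Suc_right by simp

lemma solution_exists:
  assumes T0: "\<And>n. sp_norm (T n 0) \<le> C n"
    and summable: "\<And>n. summable (\<lambda>k. (\<Prod>j<k. \<Delta> (n + j)) * C (n + k))"
  obtains w where "\<And>n. sp_norm (T n (w (Suc n)) - w n) = 0"
    and "\<And>n. sp_norm (w n) \<le> (\<Sum>k. (\<Prod>j<k. \<Delta> (n + j)) * C (n + k))"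
proof -
  have step_le: "(\<Prod>j<k. \<Delta> (n + j)) * sp_norm (T (n + k) 0) \<le> (\<Prod>j<k. \<Delta> (n + j)) * C (n + k)"
    for n k
    using T0 Delta_nonneg by (simp add: prod_nonneg mult_left_mono)
  have summable_steps: "summable (\<lambda>k. (\<Prod>j<k. \<Delta> (n + j)) * sp_norm (T (n + k) 0))" for n
  proof (rule summable_comparison_test'[OF summable[of n]])
    fix k
    have "0 \<le> (\<Prod>j<k. \<Delta> (n + j)) * sp_norm (T (n + k) 0)"
      using Delta_nonneg by (simp add: sp_norm_nonneg prod_nonneg)
    with step_le show "norm ((\<Prod>j<k. \<Delta> (n + j)) * sp_norm (T (n + k) 0)) \<le> (\<Prod>j<k. \<Delta> (n + j)) * C (n + k)"
      by simp
  qed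
  have "\<forall>n. \<exists>w. (\<lambda>k. sp_norm (iter_T T n k 0 - w)) \<longlonglongrightarrow> 0
          \<and> sp_norm (w - iter_T T n 0 0) \<le> (\<Sum>k. (\<Prod>j<k. \<Delta> (n + j)) * sp_norm (T (n + k) 0))"
    by (intro allI, rule sp_norm_summable_increments_convergent[OF iter_T_zero_increment summable_steps], blast)
  from choice[OF this] obtain w where lim: "\<And>n. (\<lambda>k. sp_norm (iter_T T n k 0 - w n)) \<longlonglongrightarrow> 0"
    and bound: "\<And>n. sp_norm (w n - iter_T T n 0 0) \<le> (\<Sum>k. (\<Prod>j<k. \<Delta> (n + j)) * sp_norm (T (n + k) 0))"
    by blast
  have solution: "sp_norm (T n (w (Suc n)) - w n) = 0" for n
  proof (rule sp_norm_eq_0_if_le_null_seq)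
    fix k
    have "sp_norm (T n (w (Suc n)) - w n)
        \<le> sp_norm (T n (w (Suc n)) - T n (iter_T T (Suc n) k 0)) + sp_norm (T n (iter_T T (Suc n) k 0) - w n)"
      by (rule sp_norm_triangle)
    also have "\<dots> \<le> \<Delta> n * sp_norm (w (Suc n) - iter_T T (Suc n) k 0) + sp_norm (iter_T T n (Suc k) 0 - w n)"
      using sp_lipschitz by (simp add: add_right_mono)
    finally show "sp_norm (T n (w (Suc n)) - w n)
        \<le> \<Delta> n * sp_norm (iter_T T (Suc n) k 0 - w (Suc n)) + sp_norm (iter_T T n (Suc k) 0 - w n)"
      using sp_norm_minus_commute[of "w (Suc n)" "iter_T T (Suc n) k 0"] by simp
  next
    show "(\<lambda>k. \<Delta> n * sp_norm (iter_T T (Suc n) k 0 - w (Suc n)) + sp_norm (iter_T T n (Suc k) 0 - w n))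
        \<longlonglongrightarrow> 0"
      using tendsto_add[OF tendsto_mult[OF tendsto_const lim] LIMSEQ_Suc[OF lim]] by simp
  qed
  have "sp_norm (w n) \<le> (\<Sum>k. (\<Prod>j<k. \<Delta> (n + j)) * C (n + k))" for n
    using order_trans[OF bound[of n] suminf_le[OF step_le summable_steps summable]] by simp
  with solution show ?thesis
    by (rule that)
qed

lemma iter_T_zero_approximates_solution:
  assumes solution: "\<And>n. sp_norm (T n (w (Suc n)) - w n) = 0"
  shows "sp_norm (iter_T T n k 0 - w n) \<le> (\<Prod>j<k. \<Delta> (n + j)) * sp_norm (w (n + k))"
proof -
  have "sp_norm (iter_T T n k 0 - w n)
      \<le> sp_norm (iter_T T n k 0 - iter_T T n k (w (n + k))) + sp_norm (iter_T T n k (w (n + k)) - w n)"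
    by (rule sp_norm_triangle)
  also have "\<dots> \<le> (\<Prod>j<k. \<Delta> (n + j)) * sp_norm (0 - w (n + k))"
    using iter_T_sp_lipschitz[of n k 0 "w (n + k)"] iter_T_solution[OF solution, of n k] by simp
  finally show ?thesis
    by (simp add: sp_norm_uminus)
qed

lemma solutions_sp_diff_le:
  assumes solution: "\<And>n. sp_norm (T n (w (Suc n)) - w n) = 0"
    and solution': "\<And>n. sp_norm (T n (w' (Suc n)) - w' n) = 0"
  shows "sp_norm (w' n - w n) \<le> (\<Prod>j<k. \<Delta> (n + j)) * sp_norm (w' (n + k) - w (n + k))"
proof -
  have "sp_norm (w' n - w n)
      \<le> sp_norm (w' n - iter_T T n k (w' (n + k)))
        + (sp_norm (iter_T T n k (w' (n + k)) - iter_T T n k (w (n + k)))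
           + sp_norm (iter_T T n k (w (n + k)) - w n))"
    using sp_norm_triangle order_trans add_left_mono by meson
  also have "\<dots> = sp_norm (iter_T T n k (w' (n + k)) - iter_T T n k (w (n + k)))"
    using iter_T_solution[OF solution, of n k] iter_T_solution[OF solution', of n k]
    by (simp add: sp_norm_minus_commute)
  also have "\<dots> \<le> (\<Prod>j<k. \<Delta> (n + j)) * sp_norm (w' (n + k) - w (n + k))"
    by (rule iter_T_sp_lipschitz)
  finally show ?thesis .
qed

lemma bounded_solutions_unique:
  assumes prod_null: "(\<lambda>k. \<Prod>j<k. \<Delta> (n + j)) \<longlonglongrightarrow> 0"
    and solution: "\<And>n. sp_norm (T n (w (Suc n)) - w n) = 0"
    and solution': "\<And>n. sp_norm (T n (w' (Suc n)) - w' n) = 0"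
    and bounded: "bdd_above (range (\<lambda>n. sp_norm (w n)))"
    and bounded': "bdd_above (range (\<lambda>n. sp_norm (w' n)))"
  shows "sp_norm (w' n - w n) = 0"
proof -
  obtain M where M: "\<And>n. sp_norm (w n) \<le> M"
    using bounded by (auto simp: bdd_above_def)
  obtain M' where M': "\<And>n. sp_norm (w' n) \<le> M'"
    using bounded' by (auto simp: bdd_above_def)
  show ?thesis
  proof (rule sp_norm_eq_0_if_le_null_seq)
    fix k
    have "sp_norm (w' (n + k) - w (n + k)) \<le> sp_norm (w' (n + k) - 0) + sp_norm (0 - w (n + k))"
      by (rule sp_norm_triangle)
    also have "\<dots> \<le> M' + M"
      using M M' by (simp add: sp_norm_uminus add_mono)
    finally have "(\<Prod>j<k. \<Delta> (n + j)) * sp_norm (w' (n + k) - w (n + k)) \<le> (\<Prod>j<k. \<Delta> (n + j)) * (M' + M)"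
      using Delta_nonneg by (intro mult_left_mono prod_nonneg) auto
    with solutions_sp_diff_le[OF solution solution']
    show "sp_norm (w' n - w n) \<le> (\<Prod>j<k. \<Delta> (n + j)) * (M' + M)"
      by (rule order_trans)
  next
    show "(\<lambda>k. (\<Prod>j<k. \<Delta> (n + j)) * (M' + M)) \<longlonglongrightarrow> 0"
      using tendsto_mult[OF prod_null tendsto_const] by simp
  qed
qed

end

theorem theorem2:
  fixes T :: "nat \<Rightarrow> ('e::polish_space \<Rightarrow>\<^sub>C real) \<Rightarrow> ('e \<Rightarrow>\<^sub>C real)"
    and \<Delta> :: "nat \<Rightarrow> real"
    and c :: "nat \<Rightarrow> 'e \<Rightarrow> 'u \<Rightarrow> real"
    and R :: "nat \<Rightarrow> real"
  assumes Delta_nonneg: "\<And>n. \<Delta> n \<ge> 0"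
    and c_bounded: "\<And>n. bounded (range (\<lambda>p. c n (fst p) (snd p)))"
    and lip: "\<And>n v1 v2. sp_norm (T n v1 - T n v2) \<le> \<Delta> n * sp_norm (v1 - v2)"
    and T0: "\<And>n. sp_norm (T n 0) \<le> sp_cost (c n)"
    and prod_lim: "\<And>n. (\<lambda>k. \<Prod>j\<le>k. \<Delta> (n + j)) \<longlonglongrightarrow> 0"
    and R_fin: "\<And>n. summable (\<lambda>i. (\<Prod>j\<le>i. \<Delta> (n + j)) * sp_cost (c (n + i + 1)))"
    and R_def: "\<And>n. R n = sp_cost (c n) + (\<Sum>i. (\<Prod>j\<le>i. \<Delta> (n + j)) * sp_cost (c (n + i + 1)))"
  shows "\<exists>w :: nat \<Rightarrow> ('e \<Rightarrow>\<^sub>C real).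
           (\<forall>n. sp_norm (T n (w (Suc n)) - w n) = 0)
         \<and> (\<forall>n. sp_norm (w n) \<le> R n)
         \<and> (\<forall>n k. k \<ge> 1 \<longrightarrow>
               sp_norm (iter_T T n k 0 - w n) \<le> (\<Prod>j<k. \<Delta> (n + j)) * sp_norm (w (n + k)))
         \<and> (bdd_above (range (\<lambda>n. sp_norm (w n))) \<longrightarrow>
              (\<forall>w' :: nat \<Rightarrow> ('e \<Rightarrow>\<^sub>C real).
                 (\<forall>n. sp_norm (T n (w' (Suc n)) - w' n) = 0)
                 \<and> bdd_above (range (\<lambda>n. sp_norm (w' n)))
                 \<longrightarrow> (\<forall>n. sp_norm (w' n - w n) = 0)))"
proof -
  interpret sp_lipschitz_family T \<Delta>
    using Delta_nonneg lip by unfold_locales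
  have summable_cost: "summable (\<lambda>k. (\<Prod>j<k. \<Delta> (n + j)) * sp_cost (c (n + k)))"
    and R_eq: "R n = (\<Sum>k. (\<Prod>j<k. \<Delta> (n + j)) * sp_cost (c (n + k)))" for n
    using prod_weighted_series_split_head[of "\<lambda>j. \<Delta> (n + j)" "\<lambda>k. sp_cost (c (n + k))"]
      R_fin[of n] R_def[of n] by simp_all
  obtain w where solution: "\<And>n. sp_norm (T n (w (Suc n)) - w n) = 0"
    and bound: "\<And>n. sp_norm (w n) \<le> R n"
    using solution_exists[OF T0 summable_cost] unfolding R_eq by blast
  have prod_null: "(\<lambda>k. \<Prod>j<k. \<Delta> (n + j)) \<longlonglongrightarrow> 0" for n
    using prod_lim[of n] unfolding lessThan_Suc_atMost[symmetric]
    by (rule LIMSEQ_imp_Suc[of "\<lambda>k. \<Prod>j<k. \<Delta> (n + j)"])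
  show ?thesis
    using solution bound iter_T_zero_approximates_solution[OF solution]
      bounded_solutions_unique[OF prod_null solution]
    by blast
qed

end
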